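(* Consider the stock-market Hamiltonian $$H=H_0+\lambda H_I,$$ $$H_0=\omega_a\,\hat n+\omega_c\,\hat k+\omega_p\,\hat P+\sum_{k\in\Lambda}\big(\Omega_A(k)\,\hat N_k+\Omega_C(k)\,\hat K_k+\Omega_O(k)\,\hat O_k\big),$$ $$H_I=\big(z^\dagger Z(f)+z\,Z^\dagger(\overline f)\big)+\big(p^\dagger o(g)+p\,o^\dagger(\overline g)\big),$$ with all symbols as defined in the context. Then the operators $$\hat N:=\hat n+\sum_{k\in\Lambda}\hat N_k,\qquad \hat K:=\hat k+\sum_{k\in\Lambda}\hat K_k,\qquad \hat\Gamma:=\hat P+\sum_{k\in\Lambda}\hat O_k$$ are constants of motion, i.e. $[H,\hat N]=[H,\hat K]=[H,\hat\Gamma]=0$.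
   Context: Let $\Lambda\subset\mathbb N$ be a finite index set (labelling the traders other than a fixed trader $\tau$). Consider bosonic annihilation operators $a,c,p$ and $A_k,C_k,o_k$ ($k\in\Lambda$) on a Fock space with vacuum $\varphi_0$ (annihilated by all of them), satisfying $[a,a^\dagger]=[c,c^\dagger]=[p,p^\dagger]=\mathbb 1$, $[A_i,A_j^\dagger]=[C_i,C_j^\dagger]=[o_i,o_j^\dagger]=\delta_{ij}\mathbb 1$, with all other commutators between these operators and their adjoints equal to zero. The Fock space is the closure of the span of the orthonormal number vectors obtained by applying normalized powers of the creation operators to $\varphi_0$. Set $\hat n=a^\dagger a$, $\hat k=c^\dagger c$, $\hat P=p^\dagger p$, $\hat N_k=A_k^\dagger A_k$, $\hat K_k=C_k^\dagger C_k$, $\hat O_k=o_k^\dagger o_k$. For a bosonic mode $c$ (resp. $C_k$), the operators $c^{\hat P}$ and $(c^\dagger)^{\hat P}$ are defined on number vectors $\varphi$ in which the $c$-mode has occupation $k$ and the $p$-mode has occupation $m$ by: $c^{\hat P}\varphi=\varphi$ if $m=0$; $c^{\hat P}\varphi=0$ if $m>k$; $c^{\hat P}\varphi=\sqrt{k(k-1)\cdots(k-m+1)}\,\varphi'$ if $k\ge m>0$, where $\varphi'$ is the same number vector with $c$-occupation $k-m$; and $(c^\dagger)^{\hat P}\varphi=\varphi$ if $m=0$, $(c^\dagger)^{\hat P}\varphi=\sqrt{(k+1)(k+2)\cdots(k+m)}\,\varphi''$ if $m>0$, where $\varphi''$ has $c$-occupation $k+m$ (all other occupations unchanged). Define $z=a\,(c^\dagger)^{\hat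 P}$, $Z_k=A_k\,(C_k^\dagger)^{\hat P}$, and smeared fields $Z(f)=\sum_{k\in\Lambda}f(k)Z_k$, $Z^\dagger(\overline f)=\sum_{k\in\Lambda}\overline{f(k)}Z_k^\dagger=\sum_{k\in\Lambda}\overline{f(k)}A_k^\dagger C_k^{\hat P}$, $o(g)=\sum_{k\in\Lambda}g(k)o_k$, $o^\dagger(\overline g)=\sum_{k\in\Lambda}\overline{g(k)}o_k^\dagger$, where $f,g:\Lambda\to\mathbb C$. Here $\lambda,\omega_a,\omega_c,\omega_p>0$ are real constants and $\Omega_A,\Omega_C,\Omega_O:\Lambda\to[0,\infty)$ are real functions. Commutators are understood formally (e.g. on finite linear combinations of number vectors). *)

theory Defs
  imports Complex_Main
begin

datatype mode = Ma | Mc | Mp | MA nat | MC nat | Mo nat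

text \<open>A number vector is determined by its occupation numbers.  A (formal) vector is
  given by its coefficients with respect to the orthonormal number basis.\<close>
type_synonym occ = "mode \<Rightarrow> nat"
type_synonym vec = "occ \<Rightarrow> complex"

text \<open>Occupation functions labelling number vectors of the Fock space for the index set L:
  modes with a label outside L do not exist, i.e. are never occupied.\<close>
definition valid_occ :: "nat set \<Rightarrow> occ \<Rightarrow> bool" where
  "valid_occ L n \<longleftrightarrow> (\<forall>k. k \<notin> L \<longrightarrow> n (MA k) = 0 \<and> n (MC k) = 0 \<and> n (Mo k) = 0)"

definition fin_comb :: "nat set \<Rightarrow> vec \<Rightarrow> bool" where
  "fin_comb L \<psi> \<longleftrightarrow> finite {n. \<psi> n \<noteq> 0} \<and> (\<forall>n. \<psi> n \<noteq> 0 \<longrightarrow> valid_occ L n)"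

text \<open>Annihilation operator of mode m (linear extension of
  a e_n = sqrt(n_m) e_{n - 1_m}), written in coefficient form.\<close>
definition ann :: "mode \<Rightarrow> vec \<Rightarrow> vec" where
  "ann m \<psi> = (\<lambda>n. complex_of_real (sqrt (real (Suc (n m)))) * \<psi> (n(m := Suc (n m))))"

text \<open>Creation operator of mode m (linear extension of a^dag e_n = sqrt(n_m+1) e_{n + 1_m}).\<close>
definition cre :: "mode \<Rightarrow> vec \<Rightarrow> vec" where
  "cre m \<psi> = (\<lambda>n. if n m = 0 then 0
                   else complex_of_real (sqrt (real (n m))) * \<psi> (n(m := n m - 1)))"

definition num :: "mode \<Rightarrow> vec \<Rightarrow> vec" where
  "num m = cre m \<circ> ann m"

text \<open>c^P: on a number vector with c-occupation k and p-occupation m it gives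
  sqrt(k(k-1)...(k-m+1)) times the vector with c-occupation k-m (identity if m = 0,
  zero if m > k).  Coefficient form of its linear extension.\<close>
definition powP_ann :: "mode \<Rightarrow> vec \<Rightarrow> vec" where
  "powP_ann c \<psi> = (\<lambda>n. let m = n Mp; k = n c + m in
       complex_of_real (sqrt (\<Prod>i<m. real (k - i))) * \<psi> (n(c := k)))"

text \<open>(c^dag)^P: on a number vector with c-occupation k and p-occupation m it gives
  sqrt((k+1)...(k+m)) times the vector with c-occupation k+m.\<close>
definition powP_cre :: "mode \<Rightarrow> vec \<Rightarrow> vec" where
  "powP_cre c \<psi> = (\<lambda>n. let m = n Mp in
       if m \<le> n c then complex_of_real (sqrt (\<Prod>i\<in>{1..m}. real (n c - m + i))) * \<psi> (n(c := n c - m))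
       else 0)"

definition z_op :: "vec \<Rightarrow> vec" where "z_op = ann Ma \<circ> powP_cre Mc"
definition zd_op :: "vec \<Rightarrow> vec" where "zd_op = powP_ann Mc \<circ> cre Ma"
definition Z_op :: "nat \<Rightarrow> vec \<Rightarrow> vec" where "Z_op k = ann (MA k) \<circ> powP_cre (MC k)"
definition Zd_op :: "nat \<Rightarrow> vec \<Rightarrow> vec" where "Zd_op k = cre (MA k) \<circ> powP_ann (MC k)"

definition Zf :: "nat set \<Rightarrow> (nat \<Rightarrow> complex) \<Rightarrow> vec \<Rightarrow> vec" where
  "Zf L f \<psi> = (\<lambda>n. \<Sum>k\<in>L. f k * Z_op k \<psi> n)"
definition Zdf :: "nat set \<Rightarrow> (nat \<Rightarrow> complex) \<Rightarrow> vec \<Rightarrow> vec" where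
  "Zdf L f \<psi> = (\<lambda>n. \<Sum>k\<in>L. cnj (f k) * Zd_op k \<psi> n)"
definition of_op :: "nat set \<Rightarrow> (nat \<Rightarrow> complex) \<Rightarrow> vec \<Rightarrow> vec" where
  "of_op L g \<psi> = (\<lambda>n. \<Sum>k\<in>L. g k * ann (Mo k) \<psi> n)"
definition odf_op :: "nat set \<Rightarrow> (nat \<Rightarrow> complex) \<Rightarrow> vec \<Rightarrow> vec" where
  "odf_op L g \<psi> = (\<lambda>n. \<Sum>k\<in>L. cnj (g k) * cre (Mo k) \<psi> n)"

definition H0 :: "nat set \<Rightarrow> real \<Rightarrow> real \<Rightarrow> real \<Rightarrow> (nat \<Rightarrow> real) \<Rightarrow> (nat \<Rightarrow> real)
                   \<Rightarrow> (nat \<Rightarrow> real) \<Rightarrow> vec \<Rightarrow> vec" where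
  "H0 L wa wc wp WA WC WO \<psi> = (\<lambda>n.
      of_real wa * num Ma \<psi> n + of_real wc * num Mc \<psi> n + of_real wp * num Mp \<psi> n
      + (\<Sum>k\<in>L. of_real (WA k) * num (MA k) \<psi> n + of_real (WC k) * num (MC k) \<psi> n
                 + of_real (WO k) * num (Mo k) \<psi> n))"

definition HI :: "nat set \<Rightarrow> (nat \<Rightarrow> complex) \<Rightarrow> (nat \<Rightarrow> complex) \<Rightarrow> vec \<Rightarrow> vec" where
  "HI L f g \<psi> = (\<lambda>n. (zd_op (Zf L f \<psi>) n + z_op (Zdf L f \<psi>) n)
                    + (cre Mp (of_op L g \<psi>) n + ann Mp (odf_op L g \<psi>) n))"

definition Ham :: "nat set \<Rightarrow> (nat \<Rightarrow> complex) \<Rightarrow> (nat \<Rightarrow> complex) \<Rightarrow> real \<Rightarrow> real \<Rightarrow> real \<Rightarrow> real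
                   \<Rightarrow> (nat \<Rightarrow> real) \<Rightarrow> (nat \<Rightarrow> real) \<Rightarrow> (nat \<Rightarrow> real) \<Rightarrow> vec \<Rightarrow> vec" where
  "Ham L f g lam wa wc wp WA WC WO \<psi> =
     (\<lambda>n. H0 L wa wc wp WA WC WO \<psi> n + of_real lam * HI L f g \<psi> n)"

definition Ntot :: "nat set \<Rightarrow> vec \<Rightarrow> vec" where
  "Ntot L \<psi> = (\<lambda>n. num Ma \<psi> n + (\<Sum>k\<in>L. num (MA k) \<psi> n))"
definition Ktot :: "nat set \<Rightarrow> vec \<Rightarrow> vec" where
  "Ktot L \<psi> = (\<lambda>n. num Mc \<psi> n + (\<Sum>k\<in>L. num (MC k) \<psi> n))"
definition Gtot :: "nat set \<Rightarrow> vec \<Rightarrow> vec" where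
  "Gtot L \<psi> = (\<lambda>n. num Mp \<psi> n + (\<Sum>k\<in>L. num (Mo k) \<psi> n))"

definition comm :: "(vec \<Rightarrow> vec) \<Rightarrow> (vec \<Rightarrow> vec) \<Rightarrow> vec \<Rightarrow> vec" where
  "comm A B \<psi> = (\<lambda>n. A (B \<psi>) n - B (A \<psi>) n)"

end

theory Submission
  imports Defs
begin

text \<open>Every term of \<open>H\<close> moves a number vector to a single other number vector (or kills it).
  The three charges are diagonal in the number basis, so it suffices that each term preserves
  their eigenvalues; e.g. \<open>Z\<^sub>k\<close> removes an \<open>A\<^sub>k\<close> quantum and \<open>P\<close> quanta of
  \<open>C\<^sub>k\<close>, which \<open>z\<^sup>\<dagger>\<close> returns to the modes \<open>a\<close> and \<open>c\<close>.  Tracking an arbitrary linear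
  combination \<open>\<alpha> N + \<beta> K + \<gamma> \<Gamma>\<close> through the terms handles all three charges at once.\<close>

text \<open>Multiplying the coefficients of \<open>\<psi>\<close> by \<open>w\<close> is the diagonal operator with eigenvalue
  \<open>w n\<close> on the number vector \<open>n\<close>; \<open>intertwines T w w\<close> says that \<open>T\<close> commutes with it.
  In general \<open>w' n\<close> is the value of \<open>w\<close> at the number vector that \<open>T\<close> maps onto \<open>n\<close>.\<close>

definition intertwines :: "(vec \<Rightarrow> vec) \<Rightarrow> (occ \<Rightarrow> complex) \<Rightarrow> (occ \<Rightarrow> complex) \<Rightarrow> bool" where
  "intertwines T w w' \<longleftrightarrow> (\<forall>\<psi>. T (\<lambda>n. w n * \<psi> n) = (\<lambda>n. w' n * T \<psi> n))"

lemma intertwines_ann: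
  "(\<And>n. w' n = w (n(m := Suc (n m)))) \<Longrightarrow> intertwines (ann m) w w'"
  by (auto simp: intertwines_def ann_def fun_eq_iff)

lemma intertwines_cre:
  "(\<And>n. n m \<noteq> 0 \<Longrightarrow> w' n = w (n(m := n m - 1))) \<Longrightarrow> intertwines (cre m) w w'"
  by (auto simp: intertwines_def cre_def fun_eq_iff)

lemma intertwines_powP_ann:
  "(\<And>n. w' n = w (n(c := n c + n Mp))) \<Longrightarrow> intertwines (powP_ann c) w w'"
  by (auto simp: intertwines_def powP_ann_def fun_eq_iff Let_def)

lemma intertwines_powP_cre:
  "(\<And>n. n Mp \<le> n c \<Longrightarrow> w' n = w (n(c := n c - n Mp))) \<Longrightarrow> intertwines (powP_cre c) w w'"
  by (auto simp: intertwines_def powP_cre_def fun_eq_iff Let_def)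

lemma intertwines_comp:
  "intertwines A w1 w2 \<Longrightarrow> intertwines B w0 w1 \<Longrightarrow> intertwines (A \<circ> B) w0 w2"
  by (simp add: intertwines_def)

lemma intertwines_sum:
  "(\<And>k. k \<in> L \<Longrightarrow> intertwines (T k) w w')
    \<Longrightarrow> intertwines (\<lambda>\<psi> n. \<Sum>k\<in>L. a k * T k \<psi> n) w w'"
  by (auto simp: intertwines_def fun_eq_iff sum_distrib_left intro!: sum.cong)

lemma num_apply: "num m \<psi> n = of_nat (n m) * \<psi> n"
proof -
  have "complex_of_real (sqrt (real (n m))) * complex_of_real (sqrt (real (n m))) = of_nat (n m)"
    by (simp flip: of_real_mult)
  then show ?thesis
    by (simp add: num_def cre_def ann_def)
qed

lemma intertwines_H0: "intertwines (H0 L wa wc wp WA WC WO) w w"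
  by (auto simp: intertwines_def H0_def num_apply fun_eq_iff algebra_simps sum_distrib_left
      intro!: sum.cong)

lemma intertwines_HI:
  assumes "intertwines (zd_op \<circ> Zf L f) w w" "intertwines (z_op \<circ> Zdf L f) w w"
    and "intertwines (cre Mp \<circ> of_op L g) w w" "intertwines (ann Mp \<circ> odf_op L g) w w"
  shows "intertwines (HI L f g) w w"
  using assms by (auto simp: intertwines_def HI_def fun_eq_iff algebra_simps)

lemma intertwines_Ham:
  "intertwines (HI L f g) w w \<Longrightarrow> intertwines (Ham L f g lam wa wc wp WA WC WO) w w"
  using intertwines_H0[of L wa wc wp WA WC WO w]
  by (auto simp: intertwines_def Ham_def fun_eq_iff algebra_simps)

lemma comm_eq_0_if_intertwines:
  assumes "intertwines A w w" and "\<And>\<psi>. D \<psi> = (\<lambda>n. w n * \<psi> n)"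
  shows "comm A D \<psi> = (\<lambda>_. 0)"
  using assms by (simp add: intertwines_def comm_def)

lemma sum_update_at:
  fixes F :: "'b \<Rightarrow> 'c::ab_group_add"
  assumes "finite L" "k \<in> L"
  shows "(\<Sum>j\<in>L. F (if j = k then x else h j)) = (\<Sum>j\<in>L. F (h j)) - F (h k) + F x"
proof -
  have "(\<Sum>j\<in>L. F (if j = k then x else h j)) = F x + (\<Sum>j\<in>L-{k}. F (h j))"
    using assms by (simp add: sum.remove)
  moreover have "(\<Sum>j\<in>L. F (h j)) = F (h k) + (\<Sum>j\<in>L-{k}. F (h j))"
    using assms by (simp add: sum.remove)
  ultimately show ?thesis
    by (simp add: algebra_simps)
qed

definition occ_total :: "nat set \<Rightarrow> mode \<Rightarrow> (nat \<Rightarrow> mode) \<Rightarrow> occ \<Rightarrow> complex" where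
  "occ_total L m M n = of_nat (n m) + (\<Sum>k\<in>L. of_nat (n (M k)))"

definition charge :: "nat set \<Rightarrow> complex \<Rightarrow> complex \<Rightarrow> complex \<Rightarrow> occ \<Rightarrow> complex" where
  "charge L \<alpha> \<beta> \<gamma> n = \<alpha> * occ_total L Ma MA n + \<beta> * occ_total L Mc MC n + \<gamma> * occ_total L Mp Mo n"

lemma intertwines_HI_charge:
  assumes "finite L"
  shows "intertwines (HI L f g) (charge L \<alpha> \<beta> \<gamma>) (charge L \<alpha> \<beta> \<gamma>)"
proof (rule intertwines_HI)
  let ?Q = "charge L \<alpha> \<beta> \<gamma>"
  note simps = charge_def occ_total_def sum_update_at[where F = of_nat] assms algebra_simps
  show "intertwines (zd_op \<circ> Zf L f) ?Q ?Q"
    unfolding zd_op_def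
  proof (rule intertwines_comp[OF intertwines_comp])
    show "intertwines (powP_ann Mc) (\<lambda>n. ?Q n - \<beta> * of_nat (n Mp)) ?Q"
      by (rule intertwines_powP_ann) (simp add: simps)
    show "intertwines (cre Ma) (\<lambda>n. ?Q n + \<alpha> - \<beta> * of_nat (n Mp)) (\<lambda>n. ?Q n - \<beta> * of_nat (n Mp))"
      by (rule intertwines_cre) (simp add: simps)
    show "intertwines (Zf L f) ?Q (\<lambda>n. ?Q n + \<alpha> - \<beta> * of_nat (n Mp))"
      unfolding Zf_def[abs_def] Z_op_def
    proof (rule intertwines_sum, rule intertwines_comp)
      fix k assume "k \<in> L"
      show "intertwines (powP_cre (MC k)) ?Q (\<lambda>n. ?Q n - \<beta> * of_nat (n Mp))"
        by (rule intertwines_powP_cre) (simp add: simps \<open>k \<in> L\<close>)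
      show "intertwines (ann (MA k)) (\<lambda>n. ?Q n - \<beta> * of_nat (n Mp)) (\<lambda>n. ?Q n + \<alpha> - \<beta> * of_nat (n Mp))"
        by (rule intertwines_ann) (simp add: simps \<open>k \<in> L\<close>)
    qed
  qed
  show "intertwines (z_op \<circ> Zdf L f) ?Q ?Q"
    unfolding z_op_def
  proof (rule intertwines_comp[OF intertwines_comp])
    show "intertwines (ann Ma) (\<lambda>n. ?Q n - \<alpha>) ?Q"
      by (rule intertwines_ann) (simp add: simps)
    show "intertwines (powP_cre Mc) (\<lambda>n. ?Q n - \<alpha> + \<beta> * of_nat (n Mp)) (\<lambda>n. ?Q n - \<alpha>)"
      by (rule intertwines_powP_cre) (simp add: simps)
    show "intertwines (Zdf L f) ?Q (\<lambda>n. ?Q n - \<alpha> + \<beta> * of_nat (n Mp))"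
      unfolding Zdf_def[abs_def] Zd_op_def
    proof (rule intertwines_sum, rule intertwines_comp)
      fix k assume "k \<in> L"
      show "intertwines (powP_ann (MC k)) ?Q (\<lambda>n. ?Q n + \<beta> * of_nat (n Mp))"
        by (rule intertwines_powP_ann) (simp add: simps \<open>k \<in> L\<close>)
      show "intertwines (cre (MA k)) (\<lambda>n. ?Q n + \<beta> * of_nat (n Mp)) (\<lambda>n. ?Q n - \<alpha> + \<beta> * of_nat (n Mp))"
        by (rule intertwines_cre) (simp add: simps \<open>k \<in> L\<close>)
    qed
  qed
  show "intertwines (cre Mp \<circ> of_op L g) ?Q ?Q"
  proof (rule intertwines_comp)
    show "intertwines (cre Mp) (\<lambda>n. ?Q n + \<gamma>) ?Q"
      by (rule intertwines_cre) (simp add: simps)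
    show "intertwines (of_op L g) ?Q (\<lambda>n. ?Q n + \<gamma>)"
      unfolding of_op_def[abs_def]
      by (rule intertwines_sum, rule intertwines_ann) (simp add: simps)
  qed
  show "intertwines (ann Mp \<circ> odf_op L g) ?Q ?Q"
  proof (rule intertwines_comp)
    show "intertwines (ann Mp) (\<lambda>n. ?Q n - \<gamma>) ?Q"
      by (rule intertwines_ann) (simp add: simps)
    show "intertwines (odf_op L g) ?Q (\<lambda>n. ?Q n - \<gamma>)"
      unfolding odf_op_def[abs_def]
      by (rule intertwines_sum, rule intertwines_cre) (simp add: simps)
  qed
qed

lemma Ntot_eq_charge: "Ntot L \<psi> = (\<lambda>n. charge L 1 0 0 n * \<psi> n)"
  by (simp add: Ntot_def charge_def occ_total_def num_apply fun_eq_iff algebra_simps sum_distrib_left)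

lemma Ktot_eq_charge: "Ktot L \<psi> = (\<lambda>n. charge L 0 1 0 n * \<psi> n)"
  by (simp add: Ktot_def charge_def occ_total_def num_apply fun_eq_iff algebra_simps sum_distrib_left)

lemma Gtot_eq_charge: "Gtot L \<psi> = (\<lambda>n. charge L 0 0 1 n * \<psi> n)"
  by (simp add: Gtot_def charge_def occ_total_def num_apply fun_eq_iff algebra_simps sum_distrib_left)

lemma comm_Ham_charge_eq_0:
  assumes "finite L" and "\<And>\<psi>. D \<psi> = (\<lambda>n. charge L \<alpha> \<beta> \<gamma> n * \<psi> n)"
  shows "comm (Ham L f g lam wa wc wp WA WC WO) D \<psi> = (\<lambda>_. 0)"
  using intertwines_Ham[OF intertwines_HI_charge[OF assms(1)]] assms(2)
  by (rule comm_eq_0_if_intertwines)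

theorem proposition1:
  fixes L :: "nat set" and f g :: "nat \<Rightarrow> complex"
    and lam wa wc wp :: real and WA WC WO :: "nat \<Rightarrow> real" and \<psi> :: vec
  assumes "finite L"
    and "lam > 0" and "wa > 0" and "wc > 0" and "wp > 0"
    and "\<And>k. WA k \<ge> 0" and "\<And>k. WC k \<ge> 0" and "\<And>k. WO k \<ge> 0"
    and "fin_comb L \<psi>"
  shows "comm (Ham L f g lam wa wc wp WA WC WO) (Ntot L) \<psi> = (\<lambda>_. 0)
       \<and> comm (Ham L f g lam wa wc wp WA WC WO) (Ktot L) \<psi> = (\<lambda>_. 0)
       \<and> comm (Ham L f g lam wa wc wp WA WC WO) (Gtot L) \<psi> = (\<lambda>_. 0)"
  by (intro conjI comm_Ham_charge_eq_0[OF \<open>finite L\<close> Ntot_eq_charge]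
      comm_Ham_charge_eq_0[OF \<open>finite L\<close> Ktot_eq_charge]
      comm_Ham_charge_eq_0[OF \<open>finite L\<close> Gtot_eq_charge])

end
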